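(* There exist graphs $G$ and $H$ with the same dominated chromatic number for which $|St_{dom}(G)-St_{dom}(H)|$ is arbitrarily large; that is, for every positive integer $N$ there exist graphs $G,H$ with $\chi_{dom}(G)=\chi_{dom}(H)$ and $|St_{dom}(G)-St_{dom}(H)|\ge N$.
   Context: A dominated coloring of a graph is a proper coloring in which every color class is dominated by at least one vertex, i.e. for each color class $C$ there is a vertex adjacent to every vertex of $C$; $\chi_{dom}(G)$ is the minimum number of colors in a dominated coloring. The dom-stability $St_{dom}(G)$ is the minimum number of vertices of $G$ whose removal changes the dominated chromatic number of $G$. *)

theory Defs
  imports Main
begin

definition graph :: "'a set \<Rightarrow> ('a \<times> 'a) set \<Rightarrow> bool" where
  "graph V E \<longleftrightarrow> finite V \<and> E \<subseteq> V \<times> V \<and> sym E \<and> irrefl E"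

definition proper_coloring :: "'a set \<Rightarrow> ('a \<times> 'a) set \<Rightarrow> ('a \<Rightarrow> nat) \<Rightarrow> nat \<Rightarrow> bool" where
  "proper_coloring V E c k \<longleftrightarrow> c ` V \<subseteq> {..<k} \<and> (\<forall>(u,v)\<in>E. c u \<noteq> c v)"

definition dominated_coloring :: "'a set \<Rightarrow> ('a \<times> 'a) set \<Rightarrow> ('a \<Rightarrow> nat) \<Rightarrow> nat \<Rightarrow> bool" where
  "dominated_coloring V E c k \<longleftrightarrow> proper_coloring V E c k \<and>
     (\<forall>i\<in>c ` V. \<exists>w\<in>V. \<forall>v\<in>V. c v = i \<longrightarrow> (w, v) \<in> E)"

definition dom_colorable :: "'a set \<Rightarrow> ('a \<times> 'a) set \<Rightarrow> bool" where
  "dom_colorable V E \<longleftrightarrow> (\<exists>c k. dominated_coloring V E c k)"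

text \<open>Dominated chromatic number (meaningful when dom_colorable, i.e. no isolated vertices).\<close>
definition chi_dom :: "'a set \<Rightarrow> ('a \<times> 'a) set \<Rightarrow> nat" where
  "chi_dom V E = (LEAST k. \<exists>c. dominated_coloring V E c k)"

definition del_vertices :: "'a set \<Rightarrow> ('a \<times> 'a) set \<Rightarrow> 'a set \<Rightarrow> 'a set \<times> ('a \<times> 'a) set" where
  "del_vertices V E S = (V - S, E \<inter> ((V - S) \<times> (V - S)))"

text \<open>Dom-stability: minimum number of vertices whose removal yields a graph
whose dominated chromatic number (exists and) differs from that of G.
Deleting all vertices always qualifies when chi_dom G > 0.\<close>
definition St_dom :: "'a set \<Rightarrow> ('a \<times> 'a) set \<Rightarrow> nat" where
  "St_dom V E = (LEAST n. \<exists>S. S \<subseteq> V \<and> card S = n \<and>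
      dom_colorable (V - S) (E \<inter> ((V - S) \<times> (V - S))) \<and>
      chi_dom (V - S) (E \<inter> ((V - S) \<times> (V - S))) \<noteq> chi_dom V E)"

end

theory Submission
  imports Defs
begin

text \<open>Every star \<open>K\<^sub>1\<^sub>,\<^sub>n\<close> has dominated chromatic number 2: colour the centre
and the leaves differently; the centre dominates the leaves and any leaf dominates the centre.
A graph with a dominated colouring has no isolated vertex, so a nonempty induced subgraph of a
star that still has a dominated colouring contains the centre and a leaf, i.e. it is again a star
and its dominated chromatic number is again 2. Hence the only deletion that changes the dominated
chromatic number removes all \<open>n + 1\<close> vertices, so \<open>St\<^sub>d\<^sub>o\<^sub>m(K\<^sub>1\<^sub>,\<^sub>n) = n + 1\<close>,
and the stars \<open>K\<^sub>1\<^sub>,\<^sub>N\<^sub>+\<^sub>1\<close> and \<open>K\<^sub>1\<^sub>,\<^sub>1\<close> witness the theorem.\<close>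

lemma dom_colorable_no_isolated:
  assumes "dom_colorable V E" "v \<in> V"
  shows "\<exists>w\<in>V. (w, v) \<in> E"
  using assms unfolding dom_colorable_def dominated_coloring_def by blast

lemma dom_colorable_no_edges_iff: "dom_colorable V {} \<longleftrightarrow> V = {}"
proof
  assume "dom_colorable V {}"
  then have "v \<notin> V" for v using dom_colorable_no_isolated[of V "{}" v] by blast
  then show "V = {}" by blast
next
  assume "V = {}"
  then have "dominated_coloring V {} (\<lambda>_. 0) 0"
    unfolding dominated_coloring_def proper_coloring_def by simp
  then show "dom_colorable V {}" unfolding dom_colorable_def by blast
qed

lemma chi_dom_empty: "chi_dom {} {} = 0"
proof -
  have "dominated_coloring {} {} (\<lambda>_. 0) 0"
    unfolding dominated_coloring_def proper_coloring_def by simp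
  then show ?thesis unfolding chi_dom_def by (metis (mono_tags) Least_eq_0)
qed

lemma proper_coloring_edge_two_le:
  assumes "proper_coloring V E c k" "(u, v) \<in> E" "u \<in> V" "v \<in> V"
  shows "2 \<le> k"
proof -
  have "c u \<noteq> c v" "c u < k" "c v < k"
    using assms unfolding proper_coloring_def by auto
  then show ?thesis by linarith
qed

lemma St_dom_eq_card:
  assumes "finite V" "chi_dom V E \<noteq> 0"
    and "\<And>S. S \<subseteq> V \<Longrightarrow> dom_colorable (V - S) (E \<inter> ((V - S) \<times> (V - S))) \<Longrightarrow>
           chi_dom (V - S) (E \<inter> ((V - S) \<times> (V - S))) \<noteq> chi_dom V E \<Longrightarrow> S = V"
  shows "St_dom V E = card V"
  unfolding St_dom_def
proof (rule Least_equality)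
  have "V - V = {}" "E \<inter> ({} \<times> {}) = {}" by simp_all
  then show "\<exists>S \<subseteq> V. card S = card V \<and> dom_colorable (V - S) (E \<inter> ((V - S) \<times> (V - S))) \<and>
      chi_dom (V - S) (E \<inter> ((V - S) \<times> (V - S))) \<noteq> chi_dom V E"
    using assms(2) by (intro exI[of _ V]) (simp add: dom_colorable_no_edges_iff chi_dom_empty)
next
  fix n
  assume "\<exists>S \<subseteq> V. card S = n \<and> dom_colorable (V - S) (E \<inter> ((V - S) \<times> (V - S))) \<and>
      chi_dom (V - S) (E \<inter> ((V - S) \<times> (V - S))) \<noteq> chi_dom V E"
  then show "card V \<le> n" using assms(3) by blast
qed

definition star_edges :: "'a \<Rightarrow> 'a set \<Rightarrow> ('a \<times> 'a) set" where
  "star_edges z L = (\<lambda>l. (z, l)) ` L \<union> (\<lambda>l. (l, z)) ` L"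

lemma star_edges_Int_Times:
  "star_edges z L \<inter> (W \<times> W) = (if z \<in> W then star_edges z (L \<inter> W) else {})"
  unfolding star_edges_def by auto

lemma graph_star:
  assumes "finite L" "z \<notin> L"
  shows "graph (insert z L) (star_edges z L)"
  using assms unfolding graph_def sym_def irrefl_def star_edges_def by auto

lemma chi_dom_star:
  assumes "z \<notin> L" "L \<noteq> {}"
  shows "dom_colorable (insert z L) (star_edges z L)"
    and "chi_dom (insert z L) (star_edges z L) = 2"
proof -
  let ?V = "insert z L" and ?E = "star_edges z L"
  let ?c = "\<lambda>v. if v = z then 0 else 1 :: nat"
  obtain l where l: "l \<in> L" using assms(2) by blast
  have "proper_coloring ?V ?E ?c 2"
    using assms(1) unfolding proper_coloring_def star_edges_def by auto
  moreover have "\<exists>w\<in>?V. \<forall>v\<in>?V. ?c v = i \<longrightarrow> (w, v) \<in> ?E" if "i \<in> ?c ` ?V" for i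
  proof -
    have "i \<in> {0, 1}" using that by auto
    then consider "i = 0" | "i = 1" by blast
    then show ?thesis
    proof cases
      case 1
      then show ?thesis using l assms(1) by (intro bexI[of _ l]) (auto simp: star_edges_def)
    next
      case 2
      then show ?thesis by (intro bexI[of _ z]) (auto simp: star_edges_def)
    qed
  qed
  ultimately have "dominated_coloring ?V ?E ?c 2"
    unfolding dominated_coloring_def by blast
  then show "dom_colorable ?V ?E" unfolding dom_colorable_def by blast
  have "(z, l) \<in> ?E" using l by (simp add: star_edges_def)
  then have "2 \<le> k" if "dominated_coloring ?V ?E c k" for c k
    using proper_coloring_edge_two_le[of ?V ?E c k z l] that l unfolding dominated_coloring_def by simp
  with \<open>dominated_coloring ?V ?E ?c 2\<close> show "chi_dom ?V ?E = 2"
    unfolding chi_dom_def by (blast intro: Least_equality)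
qed

lemma chi_dom_star_minus:
  assumes "z \<notin> L" "S \<subset> insert z L"
    and "dom_colorable (insert z L - S) (star_edges z L \<inter> ((insert z L - S) \<times> (insert z L - S)))"
  shows "chi_dom (insert z L - S) (star_edges z L \<inter> ((insert z L - S) \<times> (insert z L - S))) = 2"
proof (cases "z \<in> S \<or> L \<subseteq> S")
  case True
  then have "star_edges z L \<inter> ((insert z L - S) \<times> (insert z L - S)) = {}"
    by (auto simp: star_edges_Int_Times star_edges_def)
  with assms(2,3) show ?thesis by (auto simp: dom_colorable_no_edges_iff)
next
  case False
  then have V: "insert z L - S = insert z (L - S)" and L: "L - S \<noteq> {}" by auto
  have "L \<inter> insert z (L - S) = L - S" using assms(1) by blast
  then have "star_edges z L \<inter> ((insert z L - S) \<times> (insert z L - S)) = star_edges z (L - S)"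
    unfolding V star_edges_Int_Times by simp
  then show ?thesis using chi_dom_star(2)[of z "L - S"] assms(1) L V by simp
qed

lemma St_dom_star:
  assumes "finite L" "z \<notin> L" "L \<noteq> {}"
  shows "St_dom (insert z L) (star_edges z L) = card L + 1"
proof -
  have chi: "chi_dom (insert z L) (star_edges z L) = 2" using chi_dom_star(2)[OF assms(2,3)] .
  have "St_dom (insert z L) (star_edges z L) = card (insert z L)"
  proof (rule St_dom_eq_card)
    show "finite (insert z L)" using assms(1) by simp
    show "chi_dom (insert z L) (star_edges z L) \<noteq> 0" using chi by simp
  qed (use chi chi_dom_star_minus[OF assms(2)] in \<open>metis psubsetI\<close>)
  with assms show ?thesis by simp
qed

theorem mainTheorem11:
  fixes N :: nat
  assumes "N > 0"
  shows "\<exists>(VG :: nat set) EG (VH :: nat set) EH.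
           graph VG EG \<and> graph VH EH \<and> VG \<noteq> {} \<and> VH \<noteq> {} \<and>
           dom_colorable VG EG \<and> dom_colorable VH EH \<and>
           chi_dom VG EG = chi_dom VH EH \<and>
           \<bar>int (St_dom VG EG) - int (St_dom VH EH)\<bar> \<ge> int N"
proof (intro exI conjI)
  let ?LG = "{1..N + 1}" and ?LH = "{1 :: nat}"
  have LG: "finite ?LG" "0 \<notin> ?LG" "?LG \<noteq> {}" and LH: "finite ?LH" "0 \<notin> ?LH" "?LH \<noteq> {}"
    by auto
  show "graph (insert 0 ?LG) (star_edges 0 ?LG)" "graph (insert 0 ?LH) (star_edges 0 ?LH)"
    using graph_star[OF LG(1,2)] graph_star[OF LH(1,2)] .
  show "insert 0 ?LG \<noteq> {}" "insert 0 ?LH \<noteq> {}" by simp_all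
  show "dom_colorable (insert 0 ?LG) (star_edges 0 ?LG)"
    "dom_colorable (insert 0 ?LH) (star_edges 0 ?LH)"
    using chi_dom_star(1)[OF LG(2,3)] chi_dom_star(1)[OF LH(2,3)] .
  show "chi_dom (insert 0 ?LG) (star_edges 0 ?LG) = chi_dom (insert 0 ?LH) (star_edges 0 ?LH)"
    using chi_dom_star(2)[OF LG(2,3)] chi_dom_star(2)[OF LH(2,3)] by simp
  show "int N \<le> \<bar>int (St_dom (insert 0 ?LG) (star_edges 0 ?LG)) -
                   int (St_dom (insert 0 ?LH) (star_edges 0 ?LH))\<bar>"
    using St_dom_star[OF LG] St_dom_star[OF LH] by simp
qed

end
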